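(* Let $m,n,k$ be positive integers. If there exists an orthogonal array $\mathrm{OA}(mn,k,2,2)$, then there exists a set of $k$ mutually orthogonal frequency rectangles of type $\mathrm{FR}(2m,2n;2)$, i.e. a $k$--$\mathrm{MOFR}(2m,2n;2)$.
   Context: A frequency rectangle of type $\mathrm{FR}(m,n;q)$ is an $m\times n$ array on a symbol set $S$ of size $q$ such that each symbol of $S$ appears exactly $n/q$ times in each row and exactly $m/q$ times in each column. Two frequency rectangles of the same type (on the same symbol set) are orthogonal if, when superimposed, each of the $q^2$ ordered pairs of symbols appears the same number of times. A $k$--$\mathrm{MOFR}(m,n;q)$ is a set of $k$ frequency rectangles of type $\mathrm{FR}(m,n;q)$ that are pairwise orthogonal. An orthogonal array $\mathrm{OA}(N,k,q,t)$ is an $N\times k$ array on a symbol set of size $q$ such that in every $N\times t$ subarray each ordered $t$-tuple of symbols appears as a row the same number of times. *)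

theory Defs
  imports Main
begin

text \<open>Arrays are functions nat => nat => nat; an m x n array uses row indices i < m and
column indices j < n. The symbol set of size q is fixed to be {0..<q}.\<close>

definition freq_rect :: "nat \<Rightarrow> nat \<Rightarrow> nat \<Rightarrow> (nat \<Rightarrow> nat \<Rightarrow> nat) \<Rightarrow> bool" where
  "freq_rect m n q A \<longleftrightarrow>
     q dvd m \<and> q dvd n \<and>
     (\<forall>i<m. \<forall>j<n. A i j < q) \<and>
     (\<forall>i<m. \<forall>s<q. card {j. j < n \<and> A i j = s} = n div q) \<and>
     (\<forall>j<n. \<forall>s<q. card {i. i < m \<and> A i j = s} = m div q)"

definition orthogonal_fr :: "nat \<Rightarrow> nat \<Rightarrow> nat \<Rightarrow> (nat \<Rightarrow> nat \<Rightarrow> nat) \<Rightarrow> (nat \<Rightarrow> nat \<Rightarrow> nat) \<Rightarrow> bool" where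
  "orthogonal_fr m n q A B \<longleftrightarrow>
     (\<exists>lam. \<forall>s<q. \<forall>t<q. card {(i, j). i < m \<and> j < n \<and> A i j = s \<and> B i j = t} = lam)"

definition MOFR :: "nat \<Rightarrow> nat \<Rightarrow> nat \<Rightarrow> nat \<Rightarrow> (nat \<Rightarrow> nat \<Rightarrow> nat \<Rightarrow> nat) \<Rightarrow> bool" where
  "MOFR k m n q F \<longleftrightarrow>
     (\<forall>a<k. freq_rect m n q (F a)) \<and>
     (\<forall>a<k. \<forall>b<k. a \<noteq> b \<longrightarrow> orthogonal_fr m n q (F a) (F b))"

definition orth_array :: "nat \<Rightarrow> nat \<Rightarrow> nat \<Rightarrow> nat \<Rightarrow> (nat \<Rightarrow> nat \<Rightarrow> nat) \<Rightarrow> bool" where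
  "orth_array N k q t Arr \<longleftrightarrow>
     (\<forall>r<N. \<forall>c<k. Arr r c < q) \<and>
     (\<forall>cs. distinct cs \<and> length cs = t \<and> set cs \<subseteq> {..<k} \<longrightarrow>
        (\<exists>lam. \<forall>tup. length tup = t \<and> set tup \<subseteq> {..<q} \<longrightarrow>
             card {r. r < N \<and> map (Arr r) cs = tup} = lam))"

end

theory Submission
  imports Defs
begin

text \<open>Read each column of the orthogonal array as an \<open>m \<times> n\<close> array of bits and replace every
bit \<open>x\<close> by the \<open>2 \<times> 2\<close> block \<open>[[x, x+1], [x+1, x]]\<close> (mod 2). Each pair of cells \<open>2y, 2y+1\<close>
of a row or column of the result carries both symbols once, which gives the frequency condition.
For two columns, the pair of symbols \<open>(s, t)\<close> occurs at offset \<open>(a, b)\<close> of a block exactly when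
the block carries the pair \<open>(s + a + b, t + a + b)\<close>; as the columns of the orthogonal array are
orthogonal, every pair then occurs \<open>4 \<lambda>\<close> times.\<close>

text \<open>Row \<open>r\<close> of the orthogonal array sits at position \<open>(r div n, r mod n)\<close> of the \<open>m \<times> n\<close> array.\<close>

definition blow_up :: "nat \<Rightarrow> (nat \<Rightarrow> nat) \<Rightarrow> nat \<Rightarrow> nat \<Rightarrow> nat" where
  "blow_up n x i j = (x ((i div 2) * n + j div 2) + i + j) mod 2"

lemma mod2_add_eq_iff: "(s::nat) < 2 \<Longrightarrow> (x + y) mod 2 = s \<longleftrightarrow> y mod 2 = (s + x) mod 2"
  by (auto simp: less_2_cases_iff mod2_eq_if)

lemma card_one_per_pair:
  assumes "\<And>y. f y < 2"
  shows "card {j. j < 2 * n \<and> j mod 2 = f (j div 2)} = n"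
proof -
  let ?g = "\<lambda>y. 2 * y + f y"
  have g_div: "?g y div 2 = y" for y
    using assms[of y] by simp
  have "{j. j < 2 * n \<and> j mod 2 = f (j div 2)} = ?g ` {..<n}"
  proof (intro set_eqI iffI)
    fix j assume j: "j \<in> {j. j < 2 * n \<and> j mod 2 = f (j div 2)}"
    then have "j = ?g (j div 2)" using mult_div_mod_eq[of 2 j] by simp
    moreover have "j div 2 < n" using j by auto
    ultimately show "j \<in> ?g ` {..<n}" by blast
  next
    fix j assume "j \<in> ?g ` {..<n}"
    then obtain y where "y < n" "j = ?g y" by blast
    moreover have "?g y < 2 * n" using \<open>y < n\<close> assms[of y] by linarith
    ultimately show "j \<in> {j. j < 2 * n \<and> j mod 2 = f (j div 2)}" using assms[of y] by (simp add: g_div)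
  qed
  moreover have "inj_on ?g {..<n}"
    by (rule inj_onI) (metis g_div)
  ultimately show ?thesis by (simp add: card_image)
qed

lemma card_parity_in_pairs:
  assumes "s < 2"
  shows "card {j. j < 2 * n \<and> (h (j div 2) + j) mod 2 = s} = n"
proof -
  have "{j. j < 2 * n \<and> (h (j div 2) + j) mod 2 = s}
      = {j. j < 2 * n \<and> j mod 2 = (s + h (j div 2)) mod 2}"
    using mod2_add_eq_iff[OF assms] by simp
  then show ?thesis using card_one_per_pair[of "\<lambda>y. (s + h y) mod 2" n] by simp
qed

lemma freq_rect_blow_up: "freq_rect (2 * m) (2 * n) 2 (blow_up n x)"
proof -
  have rows: "card {j. j < 2 * n \<and> blow_up n x i j = s} = n" if "s < 2" for i s
    using card_parity_in_pairs[OF that, of n "\<lambda>y. x ((i div 2) * n + y) + i"]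
    by (simp add: blow_up_def)
  have cols: "card {i. i < 2 * m \<and> blow_up n x i j = s} = m" if "s < 2" for j s
    using card_parity_in_pairs[OF that, of m "\<lambda>y. x (y * n + j div 2) + j"]
    by (simp add: blow_up_def add_ac)
  have "blow_up n x i j < 2" for i j
    by (simp add: blow_up_def)
  then show ?thesis by (simp add: freq_rect_def rows cols)
qed

lemma linear_index_less: "(a::nat) < b \<Longrightarrow> q < m \<Longrightarrow> q * b + a < m * b"
proof -
  assume "a < b" "q < m"
  then have "q * b + a < Suc q * b" by simp
  also have "\<dots> \<le> m * b" using \<open>q < m\<close> by (intro mult_le_mono1) simp
  finally show ?thesis .
qed

lemma bij_betw_block_coords:
  fixes b m n :: nat
  shows "bij_betw (\<lambda>(i, j). ((i mod b, j mod b), (i div b) * n + j div b))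
     ({..<b * m} \<times> {..<b * n}) (({..<b} \<times> {..<b}) \<times> {..<m * n})"
    (is "bij_betw ?f ?grid ?blocks")
proof (cases "b = 0 \<or> n = 0")
  case True
  then show ?thesis by (auto simp: bij_betw_def)
next
  case False
  then have "0 < b" "0 < n" by auto
  let ?g = "\<lambda>((a, c), r). (b * (r div n) + a, b * (r mod n) + c)"
  have quotient_less: "i div b < m" if "i < b * m" for i m
    using that \<open>0 < b\<close> by (simp add: div_less_iff_less_mult mult.commute)
  show ?thesis
  proof (rule bij_betw_byWitness[where f' = ?g])
    show "\<forall>p \<in> ?grid. ?g (?f p) = p"
    proof
      fix p assume "p \<in> ?grid"
      then obtain i j where "p = (i, j)" "j < b * n" by blast
      with quotient_less[of j n] \<open>0 < n\<close> show "?g (?f p) = p" by simp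
    qed
    show "\<forall>q \<in> ?blocks. ?f (?g q) = q"
      using \<open>0 < b\<close> by auto
    show "?f ` ?grid \<subseteq> ?blocks"
    proof
      fix q assume "q \<in> ?f ` ?grid"
      then obtain i j where q: "q = ?f (i, j)" and "i < b * m" "j < b * n" by blast
      then have "(i div b) * n + j div b < m * n"
        by (intro linear_index_less quotient_less)
      with q \<open>0 < b\<close> show "q \<in> ?blocks" by simp
    qed
    show "?g ` ?blocks \<subseteq> ?grid"
    proof
      fix p assume "p \<in> ?g ` ?blocks"
      then obtain a c r where p: "p = ?g ((a, c), r)" and "a < b" "c < b" "r < m * n" by blast
      then have "r div n < m" "r mod n < n"
        using \<open>0 < n\<close> by (simp_all add: less_mult_imp_div_less)
      with \<open>a < b\<close> \<open>c < b\<close> have "(r div n) * b + a < m * b" "(r mod n) * b + c < n * b"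
        by (simp_all add: linear_index_less)
      with p show "p \<in> ?grid" by (simp add: mult.commute)
    qed
  qed
qed

lemma block_index_less: "(i::nat) < 2 * m \<Longrightarrow> j < 2 * n \<Longrightarrow> (i div 2) * n + j div 2 < m * n"
  by (intro linear_index_less) auto

lemma blow_up_eq_iff:
  assumes "x ((i div 2) * n + j div 2) < 2" "s < 2"
  shows "blow_up n x i j = s \<longleftrightarrow> x ((i div 2) * n + j div 2) = (s + i mod 2 + j mod 2) mod 2"
  using assms unfolding blow_up_def less_2_cases_iff by (auto simp: mod2_eq_if)

lemma orthogonal_fr_blow_up:
  assumes x: "\<And>r. r < m * n \<Longrightarrow> x r < 2" and y: "\<And>r. r < m * n \<Longrightarrow> y r < 2"
    and balanced: "\<And>u v. u < 2 \<Longrightarrow> v < 2 \<Longrightarrow> card {r. r < m * n \<and> x r = u \<and> y r = v} = lam"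
  shows "orthogonal_fr (2 * m) (2 * n) 2 (blow_up n x) (blow_up n y)"
proof -
  have "card {(i, j). i < 2 * m \<and> j < 2 * n \<and> blow_up n x i j = s \<and> blow_up n y i j = t} = 4 * lam"
    if "s < 2" "t < 2" for s t
  proof -
    let ?B = "\<lambda>(a, c). {r. r < m * n \<and> x r = (s + a + c) mod 2 \<and> y r = (t + a + c) mod 2}"
    let ?f = "\<lambda>(i, j). ((i mod 2, j mod 2), (i div 2) * n + j div 2)"
    let ?P = "\<lambda>(i, j). blow_up n x i j = s \<and> blow_up n y i j = t"
    let ?Q = "\<lambda>(ac, r). r \<in> ?B ac"
    have bij: "bij_betw ?f {p \<in> {..<2 * m} \<times> {..<2 * n}. ?P p}
        {q \<in> ({..<2} \<times> {..<2}) \<times> {..<m * n}. ?Q q}"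
    proof (rule bij_betw_Collect[OF bij_betw_block_coords])
      fix p assume "p \<in> {..<2 * m} \<times> {..<2 * n}"
      then obtain i j where p: "p = (i, j)" and "i < 2 * m" "j < 2 * n" by blast
      then have "(i div 2) * n + j div 2 < m * n" by (intro block_index_less)
      then show "?Q (?f p) \<longleftrightarrow> ?P p"
        unfolding p using that by (simp add: blow_up_eq_iff x y)
    qed
    have "card {(i, j). i < 2 * m \<and> j < 2 * n \<and> blow_up n x i j = s \<and> blow_up n y i j = t}
        = card {p \<in> {..<2 * m} \<times> {..<2 * n}. ?P p}"
      by (rule arg_cong[where f = card]) auto
    also have "\<dots> = card {q \<in> ({..<2} \<times> {..<2}) \<times> {..<m * n}. ?Q q}"
      using bij by (rule bij_betw_same_card)
    also have "\<dots> = card (SIGMA ac:{..<2} \<times> {..<2}. ?B ac)"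
      by (rule arg_cong[where f = card]) auto
    also have "\<dots> = 4 * lam"
      by (simp add: balanced split_def)
    finally show ?thesis .
  qed
  then show ?thesis unfolding orthogonal_fr_def by blast
qed

lemma orth_array_pair_counts:
  assumes "orth_array N k q 2 Arr" "c < k" "d < k" "c \<noteq> d"
  shows "\<exists>lam. \<forall>u<q. \<forall>v<q. card {r. r < N \<and> Arr r c = u \<and> Arr r d = v} = lam"
proof -
  have "distinct [c, d] \<and> length [c, d] = 2 \<and> set [c, d] \<subseteq> {..<k}"
    using assms by simp
  then obtain lam where lam: "\<forall>tup. length tup = 2 \<and> set tup \<subseteq> {..<q} \<longrightarrow>
      card {r. r < N \<and> map (Arr r) [c, d] = tup} = lam"
    using assms(1) unfolding orth_array_def by blast
  have "card {r. r < N \<and> Arr r c = u \<and> Arr r d = v} = lam" if "u < q" "v < q" for u v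
    using lam[rule_format, of "[u, v]"] that by simp
  then show ?thesis by blast
qed

theorem mainTheorem1:
  fixes m n k :: nat
  assumes "0 < m" and "0 < n" and "0 < k"
    and "\<exists>Arr. orth_array (m * n) k 2 2 Arr"
  shows "\<exists>F. MOFR k (2 * m) (2 * n) 2 F"
proof -
  \<comment> \<open>The construction needs none of the positivity hypotheses.\<close>
  obtain Arr where oa: "orth_array (m * n) k 2 2 Arr" using assms(4) by blast
  define F where "F c = blow_up n (\<lambda>r. Arr r c)" for c
  have symbols: "Arr r c < 2" if "r < m * n" "c < k" for r c
    using oa that by (simp add: orth_array_def)
  have "orthogonal_fr (2 * m) (2 * n) 2 (F c) (F d)" if cd: "c < k" "d < k" "c \<noteq> d" for c d
  proof -
    from orth_array_pair_counts[OF oa cd] obtain lam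
      where "\<forall>u<2. \<forall>v<2. card {r. r < m * n \<and> Arr r c = u \<and> Arr r d = v} = lam" ..
    then show ?thesis unfolding F_def using symbols cd by (intro orthogonal_fr_blow_up) auto
  qed
  then have "MOFR k (2 * m) (2 * n) 2 F"
    unfolding MOFR_def F_def using freq_rect_blow_up by blast
  then show ?thesis by blast
qed

end
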